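(* Let $g$ be a real-valued function on the primes with $0\le g(p)\le\beta$ for all primes $p$, for some constant $\beta$. Assume that for some $c>0$ and each $\varepsilon$ with $0<\varepsilon<1$, \[ \liminf_{x\to\infty}(\varepsilon\log x)^{-1}\sum_{x^{1-\varepsilon}<p\le x}p^{-1}g(p)\log p\ \ge\ c . \] Then for each $\alpha$ with $0<\alpha<c$ there is a subsequence of the primes, whose members are denoted $r$, such that \[ \lim_{x\to\infty}(\log x)^{-1}\sum_{r\le x} r^{-1}g(r)\log r=\alpha . \]
   Context: Sums indexed by $p$ run over primes; the sum over $r\le x$ runs over the members of the chosen subsequence of primes not exceeding $x$. *)

theory Defs
  imports "HOL-Analysis.Analysis" "HOL-Computational_Algebra.Primes"
begin

end

theory Submission imports Defs begin

text \<open>Select primes greedily in increasing order: a prime \<open>p\<close> is taken whenever the weight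
\<open>a(r) = g(r) log r / r\<close> of the primes selected before it is still below \<open>\<alpha> log p\<close>.
Since every single weight is at most \<open>\<beta>\<close>, the selected weight up to \<open>x\<close> never exceeds
\<open>\<alpha> log x + \<beta>\<close>. Conversely, let \<open>t \<le> x\<close> be the last prime that was rejected: at \<open>t\<close> the
selection had already reached \<open>\<alpha> log t\<close>, and all primes in \<open>(t, x]\<close> were taken. The
hypothesis on the liminf, used at the finitely many scales \<open>x\<^sup>j\<^sup>/\<^sup>N\<close>, says that these primes
carry weight at least \<open>\<alpha> (log x - log t) - (\<alpha>/N) log x\<close>. So the selected weight up to
\<open>x\<close> is \<open>\<alpha> log x + o(log x)\<close>.\<close>

fun greedy_total :: "(nat \<Rightarrow> real) \<Rightarrow> real \<Rightarrow> nat \<Rightarrow> real" where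
  "greedy_total a \<alpha> 0 = 0"
| "greedy_total a \<alpha> (Suc n) =
     greedy_total a \<alpha> n + (if prime n \<and> greedy_total a \<alpha> n < \<alpha> * ln n then a n else 0)"

definition greedy_primes :: "(nat \<Rightarrow> real) \<Rightarrow> real \<Rightarrow> nat set" where
  "greedy_primes a \<alpha> = {p. prime p \<and> greedy_total a \<alpha> p < \<alpha> * ln p}"

definition prime_weight :: "(nat \<Rightarrow> real) \<Rightarrow> real \<Rightarrow> real \<Rightarrow> real" where
  "prime_weight a t x = (\<Sum>p\<in>{p. prime p \<and> t < real p \<and> real p \<le> x}. a p)"

lemma finite_nat_le_real: "finite {n::nat. P n \<and> real n \<le> x}"
  by (rule finite_subset[of _ "{..nat \<lfloor>x\<rfloor>}"]) (auto simp: le_nat_floor)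

lemma greedy_total_eq_sum: "greedy_total a \<alpha> n = (\<Sum>p\<in>{p\<in>greedy_primes a \<alpha>. p < n}. a p)"
proof (induction n)
  case (Suc n)
  have "{p\<in>greedy_primes a \<alpha>. p < Suc n} =
      (if n \<in> greedy_primes a \<alpha> then insert n else id) {p\<in>greedy_primes a \<alpha>. p < n}"
    by (auto simp: less_Suc_eq)
  then show ?case using Suc by (auto simp: greedy_primes_def)
qed simp

lemma prime_weight_nonneg:
  assumes "\<And>p. prime p \<Longrightarrow> 0 \<le> a p"
  shows "0 \<le> prime_weight a t x"
  unfolding prime_weight_def by (rule sum_nonneg) (use assms in auto)

lemma prime_weight_antimono:
  assumes "\<And>p. prime p \<Longrightarrow> 0 \<le> a p" "t \<le> t'"
  shows "prime_weight a t' x \<le> prime_weight a t x"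
  unfolding prime_weight_def
  by (rule sum_mono2[OF finite_subset[OF _ finite_nat_le_real[of prime x]]]) (use assms in auto)

lemma greedy_sum_le:
  assumes a: "\<And>p. prime p \<Longrightarrow> 0 \<le> a p \<and> a p \<le> B" and "0 \<le> \<alpha>" "1 \<le> x"
  shows "(\<Sum>p\<in>{p\<in>greedy_primes a \<alpha>. real p \<le> x}. a p) \<le> \<alpha> * ln x + B"
proof (cases "{p\<in>greedy_primes a \<alpha>. real p \<le> x} = {}")
  case True
  have "0 \<le> B" using a[of 2] by simp
  then show ?thesis using True assms by (simp only: True) simp
next
  case False
  define Q where "Q = {p\<in>greedy_primes a \<alpha>. real p \<le> x}"
  have fin: "finite Q" unfolding Q_def by (rule finite_nat_le_real)
  define q where "q = Max Q"
  have qQ: "q \<in> Q" using False fin unfolding q_def Q_def by (intro Max_in) auto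
  then have q: "prime q" "greedy_total a \<alpha> q < \<alpha> * ln q" "real q \<le> x"
    by (auto simp: Q_def greedy_primes_def)
  have "Q = insert q {p\<in>greedy_primes a \<alpha>. p < q}"
    using qQ Max_ge[OF fin] unfolding q_def Q_def by fastforce
  then have "sum a Q = a q + greedy_total a \<alpha> q"
    by (simp add: greedy_total_eq_sum)
  also have "greedy_total a \<alpha> q < \<alpha> * ln q" by (fact q)
  also have "\<alpha> * ln q \<le> \<alpha> * ln x"
    using q \<open>0 \<le> \<alpha>\<close> prime_gt_0_nat[of q] by (intro mult_left_mono) auto
  also have "a q \<le> B" using a q by blast
  finally show ?thesis unfolding Q_def by simp
qed

lemma greedy_sum_ge:
  assumes a: "\<And>p. prime p \<Longrightarrow> 0 \<le> a p" and "1 < x"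
    and weight: "\<And>t. 1 \<le> t \<Longrightarrow> t \<le> x \<Longrightarrow> \<alpha> * (ln x - ln t) - D \<le> prime_weight a t x"
  shows "\<alpha> * ln x - D \<le> (\<Sum>p\<in>{p\<in>greedy_primes a \<alpha>. real p \<le> x}. a p)"
proof -
  define Q where "Q = {p\<in>greedy_primes a \<alpha>. real p \<le> x}"
  define P where "P = {p. prime p \<and> real p \<le> x \<and> p \<notin> greedy_primes a \<alpha>}"
  have finQ: "finite Q" unfolding Q_def by (rule finite_nat_le_real)
  have finP: "finite P" unfolding P_def by (rule finite_subset[OF _ finite_nat_le_real[of prime x]]) auto
  have a_Q: "\<And>p. p \<in> Q \<Longrightarrow> 0 \<le> a p" using a by (auto simp: Q_def greedy_primes_def)
  define t where "t = Max (insert 1 P)"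
  have t_cases: "t = 1 \<or> t \<in> P" using Max_in[of "insert 1 P"] finP unfolding t_def by auto
  have t_ge: "\<And>p. p \<in> P \<Longrightarrow> p \<le> t" using finP unfolding t_def by auto
  have t1: "1 \<le> real t" using finP unfolding t_def by (simp add: Max_ge_iff)
  have tx: "real t \<le> x" using t_cases \<open>1 < x\<close> by (auto simp: P_def)
  have before: "{p\<in>greedy_primes a \<alpha>. p < t} \<subseteq> Q" using tx by (auto simp: Q_def)
  have after: "{p. prime p \<and> real t < real p \<and> real p \<le> x} \<subseteq> Q"
  proof
    fix p assume p: "p \<in> {p. prime p \<and> real t < real p \<and> real p \<le> x}"
    then have "\<not> p \<le> t" by simp
    then have "p \<notin> P" using t_ge by blast
    then show "p \<in> Q" using p by (auto simp: P_def Q_def)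
  qed
  have "\<alpha> * ln t \<le> greedy_total a \<alpha> t"
    using t_cases
  proof
    assume "t = 1"
    then show ?thesis by simp
  qed (auto simp: P_def greedy_primes_def not_less)
  moreover have "\<alpha> * (ln x - ln t) - D \<le> prime_weight a t x"
    using weight t1 tx by simp
  moreover have "greedy_total a \<alpha> t + prime_weight a t x
      = sum a ({p\<in>greedy_primes a \<alpha>. p < t} \<union> {p. prime p \<and> real t < real p \<and> real p \<le> x})"
    unfolding greedy_total_eq_sum prime_weight_def
    by (rule sum.union_disjoint[symmetric])
      (use finite_subset[OF before finQ] finite_subset[OF after finQ] in auto)
  moreover have "\<dots> \<le> sum a Q"
    by (rule sum_mono2[OF finQ]) (use before after a_Q in auto)
  ultimately show ?thesis unfolding Q_def by (simp add: right_diff_distrib)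
qed

lemma prime_weight_ge_grid:
  fixes N :: nat
  assumes a: "\<And>p. prime p \<Longrightarrow> 0 \<le> a p" and "0 \<le> \<alpha>" "1 < x" "0 < N"
    and grid: "\<And>j. j \<in> {1..<N} \<Longrightarrow>
      \<alpha> * (1 - j / N) * ln x \<le> prime_weight a (x powr (j / N)) x"
    and t: "1 \<le> t" "t \<le> x"
  shows "\<alpha> * (ln x - ln t) - \<alpha> / N * ln x \<le> prime_weight a t x"
proof -
  have lx: "0 < ln x" using \<open>1 < x\<close> by simp
  define u where "u = ln t / ln x"
  have u: "0 \<le> u" "ln t = u * ln x" using lx t by (auto simp: u_def)
  \<comment> \<open>\<open>(j+1)/N\<close> is the first grid point above \<open>u\<close>.\<close>
  define j where "j = nat \<lfloor>u * N\<rfloor>"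
  have j: "real j \<le> u * N" "u * N < real j + 1" using u(1) by (auto simp: j_def)
  have bound_le: "\<alpha> * (ln x - ln t) - \<alpha> / N * ln x \<le> \<alpha> * (1 - \<theta>) * ln x"
    if "1 - \<theta> \<ge> 1 - u - 1 / N" for \<theta>
  proof -
    have "\<alpha> * ln x * (1 - u - 1 / N) \<le> \<alpha> * ln x * (1 - \<theta>)"
      using that lx \<open>0 \<le> \<alpha>\<close> by (intro mult_left_mono) auto
    then show ?thesis by (simp add: u(2) algebra_simps)
  qed
  show ?thesis
  proof (cases "j + 1 < N")
    case True
    define \<theta> where "\<theta> = real (j + 1) / N"
    have "u * N * ln x \<le> (j + 1) * ln x" using j(2) lx by (intro mult_right_mono) auto
    then have "ln t \<le> \<theta> * ln x" using \<open>0 < N\<close> by (simp add: u(2) \<theta>_def field_simps)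
    then have "t \<le> x powr \<theta>" using t \<open>1 < x\<close> by (subst ln_le_cancel_iff[symmetric]) (auto simp: ln_powr)
    with a have "prime_weight a (x powr \<theta>) x \<le> prime_weight a t x"
      by (rule prime_weight_antimono)
    moreover have "\<alpha> * (1 - \<theta>) * ln x \<le> prime_weight a (x powr \<theta>) x"
      using grid[of "j + 1"] True by (simp add: \<theta>_def)
    moreover have "1 - \<theta> \<ge> 1 - u - 1 / N" using j(1) \<open>0 < N\<close> by (simp add: \<theta>_def field_simps)
    ultimately show ?thesis using bound_le by fastforce
  next
    case False
    then have "real N \<le> u * N + 1" using j(1) by linarith
    then have "1 - 1 \<ge> 1 - u - 1 / N" using \<open>0 < N\<close> by (simp add: field_simps)
    moreover have "0 \<le> prime_weight a t x" using a by (rule prime_weight_nonneg)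
    ultimately show ?thesis using bound_le[of 1] by simp
  qed
qed

lemma eventually_prime_weight_gt:
  assumes "ereal \<alpha> < Liminf at_top (\<lambda>x. ereal ((\<epsilon> * ln x) powr -1 * prime_weight a (x powr \<theta>) x))"
    and "0 < \<epsilon>"
  shows "eventually (\<lambda>x. \<alpha> * \<epsilon> * ln x < prime_weight a (x powr \<theta>) x) at_top"
  using less_LiminfD[OF assms(1)] eventually_gt_at_top[of 1]
proof eventually_elim
  case (elim x)
  then have "0 < \<epsilon> * ln x" using \<open>0 < \<epsilon>\<close> by simp
  then show ?case using elim by (simp add: powr_minus_divide field_simps)
qed

lemma eventually_greedy_sum_ge:
  assumes a: "\<And>p. prime p \<Longrightarrow> 0 \<le> a p" and "0 \<le> \<alpha>" "0 < \<delta>"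
    and weight: "\<And>\<theta>. 0 < \<theta> \<Longrightarrow> \<theta> < 1 \<Longrightarrow>
      eventually (\<lambda>x. \<alpha> * (1 - \<theta>) * ln x \<le> prime_weight a (x powr \<theta>) x) at_top"
  shows "eventually (\<lambda>x. (\<alpha> - \<delta>) * ln x \<le> (\<Sum>p\<in>{p\<in>greedy_primes a \<alpha>. real p \<le> x}. a p)) at_top"
proof -
  obtain N :: nat where "\<alpha> / \<delta> < N" using reals_Archimedean2 by blast
  then have "\<alpha> < \<delta> * N" using \<open>0 < \<delta>\<close> by (simp add: field_simps)
  moreover from this have "0 < N"
    using \<open>0 \<le> \<alpha>\<close> by (cases "N = 0") auto
  ultimately have "\<alpha> / N \<le> \<delta>" by (simp add: field_simps)
  have "eventually (\<lambda>x. \<forall>j\<in>{1..<N}. \<alpha> * (1 - j / N) * ln x \<le> prime_weight a (x powr (j / N)) x) at_top"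
    by (rule eventually_ball_finite) (auto intro!: weight)
  then show ?thesis using eventually_gt_at_top[of 1]
  proof eventually_elim
    case (elim x)
    have "\<alpha> * ln x - \<alpha> / N * ln x \<le> (\<Sum>p\<in>{p\<in>greedy_primes a \<alpha>. real p \<le> x}. a p)"
      by (rule greedy_sum_ge[OF a \<open>1 < x\<close> prime_weight_ge_grid[OF a \<open>0 \<le> \<alpha>\<close> \<open>1 < x\<close> \<open>0 < N\<close>]])
        (use elim in auto)
    moreover have "\<alpha> / N * ln x \<le> \<delta> * ln x" using \<open>\<alpha> / N \<le> \<delta>\<close> elim by (intro mult_right_mono) auto
    ultimately show ?case by (simp add: left_diff_distrib)
  qed
qed

lemma tendsto_div_ln_squeeze:
  fixes T :: "real \<Rightarrow> real"
  assumes lower: "\<And>\<delta>. 0 < \<delta> \<Longrightarrow> eventually (\<lambda>x. (\<alpha> - \<delta>) * ln x \<le> T x) at_top"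
    and upper: "eventually (\<lambda>x. T x \<le> \<alpha> * ln x + B) at_top"
  shows "((\<lambda>x. T x / ln x) \<longlongrightarrow> \<alpha>) at_top"
proof (rule tendstoI)
  fix e :: real assume "0 < e"
  then have "eventually (\<lambda>x. (\<alpha> - e / 2) * ln x \<le> T x) at_top" by (intro lower) simp
  moreover have "eventually (\<lambda>x. B / e < ln x) at_top"
    using ln_at_top by (simp add: filterlim_at_top_dense)
  ultimately show "eventually (\<lambda>x. dist (T x / ln x) \<alpha> < e) at_top"
    using upper eventually_gt_at_top[of 1]
  proof eventually_elim
    case (elim x)
    then have "0 < ln x" by simp
    then show ?case using elim \<open>0 < e\<close> by (simp add: dist_real_def abs_less_iff field_simps)
  qed
qed

lemma infinite_if_sum_div_ln_tendsto_pos: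
  fixes R :: "nat set"
  assumes a: "\<And>r. r \<in> R \<Longrightarrow> 0 \<le> a r" and "0 < \<alpha>"
    and lim: "((\<lambda>x. (\<Sum>r\<in>{r\<in>R. real r \<le> x}. a r) / ln x) \<longlongrightarrow> \<alpha>) at_top"
  shows "infinite R"
proof
  assume "finite R"
  have lim0: "((\<lambda>x. sum a R / ln x) \<longlongrightarrow> 0) at_top"
    by (rule tendsto_divide_0[OF tendsto_const filterlim_at_top_imp_at_infinity[OF ln_at_top]])
  have "eventually (\<lambda>x. (\<Sum>r\<in>{r\<in>R. real r \<le> x}. a r) / ln x \<le> sum a R / ln x) at_top"
    using eventually_gt_at_top[of 1]
    by eventually_elim (intro divide_right_mono sum_mono2 \<open>finite R\<close>, use a in auto)
  with lim0 lim have "\<alpha> \<le> 0" by (rule tendsto_le[OF trivial_limit_at_top_linorder])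
  then show False using \<open>0 < \<alpha>\<close> by simp
qed

theorem lemma5:
  fixes g :: "nat \<Rightarrow> real" and \<beta> c :: real
  assumes g_bounds: "\<And>p. prime p \<Longrightarrow> 0 \<le> g p \<and> g p \<le> \<beta>"
    and c_pos: "c > 0"
    and liminf: "\<And>\<epsilon>. 0 < \<epsilon> \<Longrightarrow> \<epsilon> < 1 \<Longrightarrow>
       Liminf at_top (\<lambda>x::real. ereal ((\<epsilon> * ln x) powr -1 *
          (\<Sum>p\<in>{p. prime p \<and> x powr (1 - \<epsilon>) < real p \<and> real p \<le> x}.
              g p * ln (real p) / real p))) \<ge> ereal c"
  shows "\<forall>\<alpha>. 0 < \<alpha> \<and> \<alpha> < c \<longrightarrow>
    (\<exists>R. R \<subseteq> {p. prime p} \<and> infinite R \<and>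
      ((\<lambda>x::real. (ln x) powr -1 *
          (\<Sum>r\<in>{r\<in>R. real r \<le> x}. g r * ln (real r) / real r)) \<longlongrightarrow> \<alpha>) at_top)"
proof (intro allI impI)
  fix \<alpha> :: real assume "0 < \<alpha> \<and> \<alpha> < c"
  then have "0 < \<alpha>" "\<alpha> < c" by auto
  define a where "a p = g p * ln (real p) / real p" for p
  have a_bounds: "0 \<le> a p \<and> a p \<le> \<beta>" if "prime p" for p
  proof -
    have "0 \<le> ln (real p)" "ln (real p) / real p \<le> 1"
      using prime_ge_1_nat[OF that] ln_le_minus_one[of "real p"] by auto
    then show ?thesis
      using g_bounds[OF that] mult_left_le[of "ln p / p" "g p"] by (auto simp: a_def)
  qed
  have weight: "eventually (\<lambda>x. \<alpha> * (1 - \<theta>) * ln x \<le> prime_weight a (x powr \<theta>) x) at_top"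
    if "0 < \<theta>" "\<theta> < 1" for \<theta>
  proof -
    have "ereal \<alpha> < ereal c" using \<open>\<alpha> < c\<close> by simp
    also have "\<dots> \<le> Liminf at_top (\<lambda>x. ereal (((1 - \<theta>) * ln x) powr -1 * prime_weight a (x powr \<theta>) x))"
      using liminf[of "1 - \<theta>"] that by (simp add: prime_weight_def a_def)
    finally have "eventually (\<lambda>x. \<alpha> * (1 - \<theta>) * ln x < prime_weight a (x powr \<theta>) x) at_top"
      by (rule eventually_prime_weight_gt) (use that in simp)
    then show ?thesis by (rule eventually_mono) simp
  qed
  define R where "R = greedy_primes a \<alpha>"
  have lower: "eventually (\<lambda>x. (\<alpha> - \<delta>) * ln x \<le> (\<Sum>r\<in>{r\<in>R. real r \<le> x}. a r)) at_top"
    if "0 < \<delta>" for \<delta>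
    unfolding R_def using a_bounds \<open>0 < \<alpha>\<close> that by (intro eventually_greedy_sum_ge weight) auto
  have upper: "eventually (\<lambda>x. (\<Sum>r\<in>{r\<in>R. real r \<le> x}. a r) \<le> \<alpha> * ln x + \<beta>) at_top"
    using eventually_ge_at_top[of 1]
    by eventually_elim (unfold R_def, rule greedy_sum_le[OF a_bounds], use \<open>0 < \<alpha>\<close> in auto)
  have lim: "((\<lambda>x. (\<Sum>r\<in>{r\<in>R. real r \<le> x}. a r) / ln x) \<longlongrightarrow> \<alpha>) at_top"
    using lower upper by (rule tendsto_div_ln_squeeze)
  show "\<exists>R. R \<subseteq> {p. prime p} \<and> infinite R \<and>
      ((\<lambda>x::real. (ln x) powr -1 *
          (\<Sum>r\<in>{r\<in>R. real r \<le> x}. g r * ln (real r) / real r)) \<longlongrightarrow> \<alpha>) at_top"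
  proof (intro exI conjI)
    show "R \<subseteq> {p. prime p}" by (auto simp: R_def greedy_primes_def)
    show "infinite R"
      using lim \<open>0 < \<alpha>\<close> a_bounds
      by (intro infinite_if_sum_div_ln_tendsto_pos) (auto simp: R_def greedy_primes_def)
    show "((\<lambda>x. (ln x) powr -1 *
        (\<Sum>r\<in>{r\<in>R. real r \<le> x}. g r * ln (real r) / real r)) \<longlongrightarrow> \<alpha>) at_top"
      using lim by (rule Lim_transform_eventually)
        (use eventually_gt_at_top[of 1] in \<open>eventually_elim, simp add: a_def powr_minus_divide\<close>)
  qed
qed

end
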